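(* Let $(A,\cdot)$ be a commutative associative algebra and $(A,\circ)$ a Lie-admissible algebra (i.e. $[x,y]=x\circ y-y\circ x$ defines a Lie algebra $(A,[-,-])$) such that for all $x,y,z\in A$: $$2(x\circ y)\cdot z-2(y\circ x)\cdot z=y\cdot(x\circ z)-x\cdot(y\circ z),\qquad 2x\circ(y\cdot z)=(z\cdot x)\circ y+z\cdot(x\circ y).$$ Then $(A,\cdot,[-,-])$ is a transposed Poisson algebra. In particular, if $(A,\cdot,\circ)$ is an anti-pre-Lie Poisson algebra, then $(A,\cdot,[-,-])$ is a transposed Poisson algebra.
   Context: All vector spaces are finite-dimensional over a field $\mathbb F$ of characteristic $0$. A transposed Poisson algebra is $(A,\cdot,[-,-])$ with $(A,\cdot)$ commutative associative, $(A,[-,-])$ a Lie algebra, and $2z\cdot[x,y]=[z\cdot x,y]+[x,z\cdot y]$ for all $x,y,z$. An anti-pre-Lie algebra is $(A,\circ)$ with $x\circ(y\circ z)-y\circ(x\circ z)=[y,x]\circ z$ and $[x,y]\circ z+[y,z]\circ x+[z,x]\circ y=0$; an anti-pre-Lie Poisson algebra is $(A,\cdot,\circ)$ with $(A,\cdot)$ commutative associative, $(A,\circ)$ anti-pre-Lie, satisfying the two displayed identities. *)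

theory Defs
  imports Complex_Main
begin

definition bilinear_op :: "('k::field \<Rightarrow> 'v::ab_group_add \<Rightarrow> 'v) \<Rightarrow> ('v \<Rightarrow> 'v \<Rightarrow> 'v) \<Rightarrow> bool" where
  "bilinear_op sc p \<longleftrightarrow>
     (\<forall>x y z. p (x + y) z = p x z + p y z) \<and>
     (\<forall>x y z. p x (y + z) = p x y + p x z) \<and>
     (\<forall>a x y. p (sc a x) y = sc a (p x y)) \<and>
     (\<forall>a x y. p x (sc a y) = sc a (p x y))"

definition comm_assoc_alg :: "('k::field \<Rightarrow> 'v::ab_group_add \<Rightarrow> 'v) \<Rightarrow> ('v \<Rightarrow> 'v \<Rightarrow> 'v) \<Rightarrow> bool" where
  "comm_assoc_alg sc m \<longleftrightarrow> bilinear_op sc m \<and>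
     (\<forall>x y. m x y = m y x) \<and> (\<forall>x y z. m (m x y) z = m x (m y z))"

definition lie_alg :: "('k::field \<Rightarrow> 'v::ab_group_add \<Rightarrow> 'v) \<Rightarrow> ('v \<Rightarrow> 'v \<Rightarrow> 'v) \<Rightarrow> bool" where
  "lie_alg sc br \<longleftrightarrow> bilinear_op sc br \<and>
     (\<forall>x. br x x = 0) \<and>
     (\<forall>x y z. br x (br y z) + br y (br z x) + br z (br x y) = 0)"

definition commutator :: "('v::ab_group_add \<Rightarrow> 'v \<Rightarrow> 'v) \<Rightarrow> 'v \<Rightarrow> 'v \<Rightarrow> 'v" where
  "commutator c x y = c x y - c y x"

definition lie_admissible :: "('k::field \<Rightarrow> 'v::ab_group_add \<Rightarrow> 'v) \<Rightarrow> ('v \<Rightarrow> 'v \<Rightarrow> 'v) \<Rightarrow> bool" where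
  "lie_admissible sc c \<longleftrightarrow> bilinear_op sc c \<and> lie_alg sc (commutator c)"

definition transposed_poisson :: "('k::field \<Rightarrow> 'v::ab_group_add \<Rightarrow> 'v) \<Rightarrow> ('v \<Rightarrow> 'v \<Rightarrow> 'v) \<Rightarrow> ('v \<Rightarrow> 'v \<Rightarrow> 'v) \<Rightarrow> bool" where
  "transposed_poisson sc m br \<longleftrightarrow> comm_assoc_alg sc m \<and> lie_alg sc br \<and>
     (\<forall>x y z. sc 2 (m z (br x y)) = br (m z x) y + br x (m z y))"

definition anti_pre_lie :: "('k::field \<Rightarrow> 'v::ab_group_add \<Rightarrow> 'v) \<Rightarrow> ('v \<Rightarrow> 'v \<Rightarrow> 'v) \<Rightarrow> bool" where
  "anti_pre_lie sc c \<longleftrightarrow> bilinear_op sc c \<and>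
     (\<forall>x y z. c x (c y z) - c y (c x z) = c (commutator c y x) z) \<and>
     (\<forall>x y z. c (commutator c x y) z + c (commutator c y z) x + c (commutator c z x) y = 0)"

definition anti_pre_lie_poisson :: "('k::field \<Rightarrow> 'v::ab_group_add \<Rightarrow> 'v) \<Rightarrow> ('v \<Rightarrow> 'v \<Rightarrow> 'v) \<Rightarrow> ('v \<Rightarrow> 'v \<Rightarrow> 'v) \<Rightarrow> bool" where
  "anti_pre_lie_poisson sc m c \<longleftrightarrow> comm_assoc_alg sc m \<and> anti_pre_lie sc c \<and>
     (\<forall>x y z. sc 2 (m (c x y) z) - sc 2 (m (c y x) z) = m y (c x z) - m x (c y z)) \<and>
     (\<forall>x y z. sc 2 (c x (m y z)) = c (m z x) y + m z (c x y))"

end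

theory Submission
  imports Defs
begin

text \<open>Write \<open>A = x \<circ> (y z)\<close>, \<open>B = y \<circ> (x z)\<close>, \<open>P = z (x \<circ> y)\<close>, \<open>Q = z (y \<circ> x)\<close>.
Instantiating the second compatibility identity at \<open>(x, z, y)\<close> and \<open>(y, z, x)\<close> and
subtracting gives \<open>2(A - B) = y (x \<circ> z) - x (y \<circ> z)\<close>, which the first identity rewrites
to \<open>2(P - Q)\<close>; in characteristic \<open>\<noteq> 2\<close> this yields \<open>A - B = P - Q\<close>. Instantiating the
second identity at \<open>(x, y, z)\<close> and \<open>(y, x, z)\<close> expresses \<open>[z x, y] + [x, z y]\<close> as
\<open>3(A - B) - (P - Q) = 2(P - Q) = 2 z [x, y]\<close>, the transposed Leibniz rule.
For an anti-pre-Lie algebra the Jacobi identity of \<open>[-,-]\<close> follows from the two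
defining identities, so the second claim reduces to the first.\<close>

lemma bilinear_op_additive_left: "bilinear_op sc p \<Longrightarrow> additive (\<lambda>x. p x y)"
  unfolding bilinear_op_def by unfold_locales blast

lemma bilinear_op_additive_right: "bilinear_op sc p \<Longrightarrow> additive (p x)"
  unfolding bilinear_op_def by unfold_locales blast

lemma bilinear_op_commutator:
  assumes "vector_space sc" and "bilinear_op sc c"
  shows "bilinear_op sc (commutator c)"
proof -
  interpret vector_space sc by fact
  show ?thesis
    using assms(2)
    unfolding bilinear_op_def commutator_def by (simp add: scale_right_diff_distrib)
qed

lemma commutator_swap: "commutator c y x = - commutator c x y"
  unfolding commutator_def by simp

lemma anti_pre_lie_commutator_jacobi:
  assumes "anti_pre_lie sc c"
  shows "commutator c x (commutator c y z) + commutator c y (commutator c z x)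
           + commutator c z (commutator c x y) = 0"
proof -
  have bil: "bilinear_op sc c"
    and left_comm: "\<And>x y z. c x (c y z) - c y (c x z) = c (commutator c y x) z"
    and cyclic: "\<And>x y z. c (commutator c x y) z + c (commutator c y z) x
                           + c (commutator c z x) y = 0"
    using assms unfolding anti_pre_lie_def by blast+
  have diff_right: "c x (u - v) = c x u - c x v" for x u v
    using additive.diff[OF bilinear_op_additive_right[OF bil]] .
  have minus_left: "c (- u) z = - c u z" for u z
    using additive.minus[OF bilinear_op_additive_left[OF bil]] .
  have "commutator c x (commutator c y z) + commutator c y (commutator c z x)
          + commutator c z (commutator c x y)
        = (c x (c y z) - c y (c x z)) + (c y (c z x) - c z (c y x)) + (c z (c x y) - c x (c z y))
          - (c (commutator c x y) z + c (commutator c y z) x + c (commutator c z x) y)"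
    unfolding commutator_def[of c x] commutator_def[of c y] commutator_def[of c z] diff_right
    by (simp add: algebra_simps)
  also have "\<dots> = c (commutator c y x) z + c (commutator c z y) x + c (commutator c x z) y"
    by (simp add: left_comm cyclic)
  also have "\<dots> = - (c (commutator c x y) z + c (commutator c y z) x + c (commutator c z x) y)"
    unfolding commutator_swap[where x=x and y=y] commutator_swap[where x=y and y=z]
      commutator_swap[where x=z and y=x] minus_left by simp
  also have "\<dots> = 0"
    by (simp add: cyclic)
  finally show ?thesis .
qed

lemma lie_alg_commutator_if_anti_pre_lie:
  assumes "vector_space sc" and "anti_pre_lie sc c"
  shows "lie_alg sc (commutator c)"
  using assms bilinear_op_commutator anti_pre_lie_commutator_jacobi
  unfolding lie_alg_def anti_pre_lie_def by (simp add: commutator_def) blast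

lemma compatible_swap_difference:
  fixes sc :: "'k::field_char_0 \<Rightarrow> 'v::ab_group_add \<Rightarrow> 'v"
  assumes vs: "vector_space sc"
    and m_comm: "\<And>x y. m x y = m y x"
    and h1: "\<And>x y z. sc 2 (m (c x y) z) - sc 2 (m (c y x) z) = m y (c x z) - m x (c y z)"
    and h2: "\<And>x y z. sc 2 (c x (m y z)) = c (m z x) y + m z (c x y)"
  shows "c x (m y z) - c y (m x z) = m z (c x y) - m z (c y x)"
proof -
  interpret vector_space sc by fact
  have "sc 2 (c x (m y z) - c y (m x z)) = sc 2 (c x (m z y)) - sc 2 (c y (m z x))"
    by (simp add: scale_right_diff_distrib m_comm)
  also have "\<dots> = m y (c x z) - m x (c y z)"
    using h2[of x z y] h2[of y z x] m_comm[of x y] by simp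
  also have "\<dots> = sc 2 (m z (c x y) - m z (c y x))"
    using h1[of x y z] by (simp add: scale_right_diff_distrib m_comm)
  finally show ?thesis by simp
qed

lemma transposed_leibniz_if_compatible:
  fixes sc :: "'k::field_char_0 \<Rightarrow> 'v::ab_group_add \<Rightarrow> 'v"
  assumes vs: "vector_space sc" and m_bil: "bilinear_op sc m"
    and m_comm: "\<And>x y. m x y = m y x"
    and h1: "\<And>x y z. sc 2 (m (c x y) z) - sc 2 (m (c y x) z) = m y (c x z) - m x (c y z)"
    and h2: "\<And>x y z. sc 2 (c x (m y z)) = c (m z x) y + m z (c x y)"
  shows "sc 2 (m z (commutator c x y)) = commutator c (m z x) y + commutator c x (m z y)"
proof -
  interpret vector_space sc by fact
  have two: "sc 2 v = v + v" for v
    using scale_left_distrib[of 1 1 v] by simp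
  define A B P Q
    where "A = c x (m y z)" and "B = c y (m x z)" and "P = m z (c x y)" and "Q = m z (c y x)"
  have A_eq: "A = P - Q + B"
    using compatible_swap_difference[where sc=sc and m=m and c=c and x=x and y=y and z=z, OF vs m_comm h1 h2]
    unfolding A_def B_def P_def Q_def by (simp add: diff_eq_eq)
  have "commutator c (m z x) y + commutator c x (m z y) = (A + A - P - B) + (A - (B + B - Q))"
    using h2[of x y z] h2[of y x z]
    unfolding commutator_def A_def B_def P_def Q_def two by (simp add: m_comm algebra_simps)
  also have "\<dots> = sc 2 (P - Q)"
    unfolding A_eq two by (simp add: algebra_simps)
  also have "P - Q = m z (commutator c x y)"
    unfolding P_def Q_def commutator_def
    using additive.diff[OF bilinear_op_additive_right[OF m_bil]] by simp
  finally show ?thesis by simp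
qed

theorem proposition3p44:
  fixes sc :: "'k::field_char_0 \<Rightarrow> 'v::ab_group_add \<Rightarrow> 'v"
    and m c :: "'v \<Rightarrow> 'v \<Rightarrow> 'v"
  assumes vs: "vector_space sc"
    and fin: "\<exists>B. finite_dimensional_vector_space sc B"
  shows "(comm_assoc_alg sc m \<and> lie_admissible sc c \<and>
          (\<forall>x y z. sc 2 (m (c x y) z) - sc 2 (m (c y x) z) = m y (c x z) - m x (c y z)) \<and>
          (\<forall>x y z. sc 2 (c x (m y z)) = c (m z x) y + m z (c x y))
          \<longrightarrow> transposed_poisson sc m (commutator c))
       \<and> (anti_pre_lie_poisson sc m c \<longrightarrow> transposed_poisson sc m (commutator c))"
proof -
  have compatible_imp_tp: "transposed_poisson sc m (commutator c)"
    if "comm_assoc_alg sc m" and "lie_alg sc (commutator c)"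
      and "\<forall>x y z. sc 2 (m (c x y) z) - sc 2 (m (c y x) z) = m y (c x z) - m x (c y z)"
      and "\<forall>x y z. sc 2 (c x (m y z)) = c (m z x) y + m z (c x y)"
    using that transposed_leibniz_if_compatible[OF vs]
    unfolding transposed_poisson_def comm_assoc_alg_def by blast
  show ?thesis
    using compatible_imp_tp lie_alg_commutator_if_anti_pre_lie[OF vs]
    unfolding lie_admissible_def anti_pre_lie_poisson_def by blast
qed

end
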